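(* Let $I$ be a fuzzy implication function and $T$ a t-norm, and suppose $I$ satisfies the ordering property: $I(x,y)=1\iff x\le y$, for all $x,y\in[0,1]$. Then $I$ satisfies the monotonicity of the generalized modus ponens with respect to $T$ (i.e. $T(\tilde x,I(\tilde x,y))\le T(x,I(x,y))$ for all $x,\tilde x,y\in[0,1]$ with $\tilde x\le x$) if and only if, for every $y\in[0,1)$, the function $f_y:[y,1]\to[0,1]$, $f_y(x)=T(x,I(x,y))$, is increasing.
   Context: A fuzzy implication function is a map $I:[0,1]^2\to[0,1]$ decreasing in the first variable, increasing in the second, with $I(0,0)=I(1,1)=1$, $I(1,0)=0$. A t-norm is a commutative, associative binary operation on $[0,1]$, increasing in both variables, with neutral element $1$. "Increasing" means non-decreasing. *)

theory Defs
  imports Main "HOL.Real"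
begin


definition fuzzy_implication :: "(real \<Rightarrow> real \<Rightarrow> real) \<Rightarrow> bool" where
  "fuzzy_implication I \<longleftrightarrow>
     (\<forall>x\<in>{0..1}. \<forall>y\<in>{0..1}. I x y \<in> {0..1}) \<and>
     (\<forall>x1\<in>{0..1}. \<forall>x2\<in>{0..1}. \<forall>y\<in>{0..1}. x1 \<le> x2 \<longrightarrow> I x2 y \<le> I x1 y) \<and>
     (\<forall>x\<in>{0..1}. \<forall>y1\<in>{0..1}. \<forall>y2\<in>{0..1}. y1 \<le> y2 \<longrightarrow> I x y1 \<le> I x y2) \<and>
     I 0 0 = 1 \<and> I 1 1 = 1 \<and> I 1 0 = 0"

definition t_norm :: "(real \<Rightarrow> real \<Rightarrow> real) \<Rightarrow> bool" where
  "t_norm T \<longleftrightarrow>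
     (\<forall>x\<in>{0..1}. \<forall>y\<in>{0..1}. T x y \<in> {0..1}) \<and>
     (\<forall>x\<in>{0..1}. \<forall>y\<in>{0..1}. T x y = T y x) \<and>
     (\<forall>x\<in>{0..1}. \<forall>y\<in>{0..1}. \<forall>z\<in>{0..1}. T x (T y z) = T (T x y) z) \<and>
     (\<forall>x1\<in>{0..1}. \<forall>x2\<in>{0..1}. \<forall>y\<in>{0..1}. x1 \<le> x2 \<longrightarrow> T x1 y \<le> T x2 y) \<and>
     (\<forall>x\<in>{0..1}. T x 1 = x)"

definition ordering_property :: "(real \<Rightarrow> real \<Rightarrow> real) \<Rightarrow> bool" where
  "ordering_property I \<longleftrightarrow> (\<forall>x\<in>{0..1}. \<forall>y\<in>{0..1}. I x y = 1 \<longleftrightarrow> x \<le> y)"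

definition monotone_GMP :: "(real \<Rightarrow> real \<Rightarrow> real) \<Rightarrow> (real \<Rightarrow> real \<Rightarrow> real) \<Rightarrow> bool" where
  "monotone_GMP I T \<longleftrightarrow>
     (\<forall>x\<in>{0..1}. \<forall>xt\<in>{0..1}. \<forall>y\<in>{0..1}. xt \<le> x \<longrightarrow> T xt (I xt y) \<le> T x (I x y))"

end

theory Submission
  imports Defs
begin

text \<open>Write \<open>f\<^sub>y x = T x (I x y)\<close>; monotonicity of the generalized modus ponens says exactly
  that every \<open>f\<^sub>y\<close> is increasing on \<open>[0,1]\<close>. By the ordering property \<open>I x y = 1\<close> for
  \<open>x \<le> y\<close>, so \<open>f\<^sub>y\<close> is the identity on \<open>[0,y]\<close>. A function increasing on \<open>[0,y]\<close> and on
  \<open>[y,1]\<close> is increasing on \<open>[0,1]\<close>, so only the restriction to \<open>[y,1]\<close> matters, and for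
  \<open>y = 1\<close> that restriction is trivially increasing.\<close>

lemma mono_on_atLeastAtMost_glue:
  fixes f :: "'a::linorder \<Rightarrow> 'b::order"
  assumes "mono_on {a..c} f" and "mono_on {c..b} f"
  shows "mono_on {a..b} f"
proof (rule mono_onI)
  fix r s assume r: "r \<in> {a..b}" and s: "s \<in> {a..b}" and "r \<le> s"
  consider "s \<le> c" | "c \<le> r" | "r < c" "c < s" by fastforce
  then show "f r \<le> f s"
  proof cases
    case 1
    then show ?thesis using mono_onD[OF assms(1)] r s \<open>r \<le> s\<close> by auto
  next
    case 2
    then show ?thesis using mono_onD[OF assms(2)] r s \<open>r \<le> s\<close> by auto
  next
    case 3
    then have "f r \<le> f c" using mono_onD[OF assms(1)] r by auto
    also have "f c \<le> f s" using 3 mono_onD[OF assms(2)] s by auto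
    finally show ?thesis .
  qed
qed

lemma t_norm_one_right: "t_norm T \<Longrightarrow> x \<in> {0..1} \<Longrightarrow> T x 1 = x"
  unfolding t_norm_def by blast

lemma ordering_propertyD:
  "ordering_property I \<Longrightarrow> x \<in> {0..1} \<Longrightarrow> y \<in> {0..1} \<Longrightarrow> I x y = 1 \<longleftrightarrow> x \<le> y"
  unfolding ordering_property_def by blast

lemma t_norm_implication_eq_left:
  assumes "t_norm T" and "ordering_property I"
    and "x \<in> {0..1}" and "y \<in> {0..1}" and "x \<le> y"
  shows "T x (I x y) = x"
proof -
  have "I x y = 1" using assms(2-5) by (simp add: ordering_propertyD)
  then show ?thesis using assms(1,3) by (simp add: t_norm_one_right)
qed

lemma mono_on_t_norm_implication_below:
  assumes "t_norm T" and "ordering_property I" and "y \<in> {0..1}"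
  shows "mono_on {0..y} (\<lambda>x. T x (I x y))"
  using assms by (intro mono_onI) (simp add: t_norm_implication_eq_left)

lemma monotone_GMP_iff_mono_on:
  "monotone_GMP I T \<longleftrightarrow> (\<forall>y\<in>{0..1}. mono_on {0..1} (\<lambda>x. T x (I x y)))"
  unfolding monotone_GMP_def mono_on_def by blast

theorem proposition10:
  fixes I T :: "real \<Rightarrow> real \<Rightarrow> real"
  assumes "fuzzy_implication I" and "t_norm T" and "ordering_property I"
  shows "monotone_GMP I T \<longleftrightarrow>
    (\<forall>y\<in>{0..<1}. mono_on {y..1} (\<lambda>x. T x (I x y)))"
proof -
  have "mono_on {0..1} (\<lambda>x. T x (I x y)) \<longleftrightarrow> mono_on {y..1} (\<lambda>x. T x (I x y))"
    if "y \<in> {0..1}" for y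
    using that mono_on_atLeastAtMost_glue mono_on_t_norm_implication_below[OF assms(2,3) that]
      mono_on_subset[of "{0..1}" _ "{y..1}"] by auto
  then have "monotone_GMP I T \<longleftrightarrow> (\<forall>y\<in>{0..1}. mono_on {y..1} (\<lambda>x. T x (I x y)))"
    by (simp add: monotone_GMP_iff_mono_on)
  also have "\<dots> \<longleftrightarrow> (\<forall>y\<in>{0..<1}. mono_on {y..1} (\<lambda>x. T x (I x y)))"
  proof -
    have "mono_on {1..1} (\<lambda>x. T x (I x 1))" by (simp add: mono_on_def)
    then show ?thesis by (metis atLeastAtMost_iff atLeastLessThan_iff order_less_le)
  qed
  finally show ?thesis .
qed

end
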